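(* Let $\rho_1,\rho_2,k_1,k_2,L>0$, $0<\alpha<1$ and $\eta\ge 0$, and let $\mathcal{A}$ be the operator on $\mathcal{H}$ described in the context. For every $\lambda\in\mathbb{R}$, the operator $i\lambda I-\mathcal{A}:\mathcal{D}(\mathcal{A})\to\mathcal{H}$ is injective.
   Context: Set $\mu(\xi)=|\xi|^{(2\alpha-1)/2}$ for $\xi\in\mathbb{R}$ and $\mathfrak{C}=\pi^{-1}\sin(\alpha\pi)$. All function spaces are complex. Let $\mathbb{H}^1_0=\{(u,v)\in H^1(-L,0)\times H^1(0,L):\ u(-L)=v(L)=0,\ u(0)=v(0)\}$, $\mathbb{L}^2=L^2(-L,0)\times L^2(0,L)$, and $\mathcal{H}=\mathbb{H}^1_0\times\mathbb{L}^2\times L^2(\mathbb{R};\mathbb{L}^2)$, whose elements are written $\mathbb{U}=(u,v,U,V,\varphi_1,\varphi_2)$ with $(u,v)\in\mathbb{H}^1_0$, $(U,V)\in\mathbb{L}^2$, $\varphi_1\in L^2(\mathbb{R};L^2(-L,0))$, $\varphi_2\in L^2(\mathbb{R};L^2(0,L))$ (functions of $(x,\xi)$). $\mathcal{H}$ is a Hilbert space with inner product $\langle\mathbb{U},\tilde{\mathbb{U}}\rangle_{\mathcal H}=\rho_1\int_{-L}^0U\overline{\tilde U}dx+\rho_2\int_0^LV\overline{\tilde V}dx+k_1\int_{-L}^0u_x\overline{\tilde u_x}dx+k_2\int_0^Lv_x\overline{\tilde v_x}dx+\mathfrak{C}\int_{\mathbb R}\int_{-L}^0\varphi_1\overline{\tilde\varphi_1}\,dx\,d\xi+\mathfrak{C}\int_{\mathbb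 R}\int_0^L\varphi_2\overline{\tilde\varphi_2}\,dx\,d\xi$. The domain $\mathcal{D}(\mathcal{A})$ is the set of $\mathbb{U}=(u,v,U,V,\varphi_1,\varphi_2)\in\mathcal{H}$ such that $(U,V)\in\mathbb{H}^1_0$, $u\in H^2(-L,0)$, $v\in H^2(0,L)$, $k_1u_x(0)=k_2v_x(0)$, $|\xi|\varphi_1\in L^2(\mathbb{R};L^2(-L,0))$, $-(|\xi|^2+\eta)\varphi_1+\mu(\xi)U\in L^2(\mathbb{R};L^2(-L,0))$, $|\xi|\varphi_2\in L^2(\mathbb{R};L^2(0,L))$, $-(|\xi|^2+\eta)\varphi_2+\mu(\xi)V\in L^2(\mathbb{R};L^2(0,L))$; and $$\mathcal{A}\mathbb{U}=\Big(U,\ V,\ \tfrac{1}{\rho_1}\big[k_1u_{xx}-\mathfrak{C}\textstyle\int_{\mathbb R}\mu(\xi)\varphi_1(\cdot,\xi)d\xi\big],\ \tfrac{1}{\rho_2}\big[k_2v_{xx}-\mathfrak{C}\textstyle\int_{\mathbb R}\mu(\xi)\varphi_2(\cdot,\xi)d\xi\big],\ -(|\xi|^2+\eta)\varphi_1+\mu(\xi)U,\ -(|\xi|^2+\eta)\varphi_2+\mu(\xi)V\Big).$$ *)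

theory Defs
  imports "HOL-Analysis.Analysis"
begin

definition mu :: "real \<Rightarrow> real \<Rightarrow> real" where
  "mu \<alpha> \<xi> = \<bar>\<xi>\<bar> powr ((2 * \<alpha> - 1) / 2)"

definition frakC :: "real \<Rightarrow> real" where
  "frakC \<alpha> = sin (\<alpha> * pi) / pi"

definition L2_on :: "real \<Rightarrow> real \<Rightarrow> (real \<Rightarrow> complex) \<Rightarrow> bool" where
  "L2_on a b f \<longleftrightarrow>
     (\<lambda>x. indicator {a..b} x *\<^sub>R f x) \<in> borel_measurable lborel \<and>
     integrable lborel (\<lambda>x. indicator {a..b} x * (cmod (f x))\<^sup>2)"

text \<open>L2(R; L2(a,b)), functions of (x, xi), identified with L2 of the product (a,b) x R.\<close>
definition L2_prod :: "real \<Rightarrow> real \<Rightarrow> (real \<Rightarrow> real \<Rightarrow> complex) \<Rightarrow> bool" where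
  "L2_prod a b \<phi> \<longleftrightarrow>
     (\<lambda>z. indicator ({a..b} \<times> UNIV) z *\<^sub>R \<phi> (fst z) (snd z)) \<in> borel_measurable (lborel \<Otimes>\<^sub>M lborel) \<and>
     integrable (lborel \<Otimes>\<^sub>M lborel)
       (\<lambda>z. indicator ({a..b} \<times> UNIV) z * (cmod (\<phi> (fst z) (snd z)))\<^sup>2)"

definition test_fun :: "real \<Rightarrow> real \<Rightarrow> (real \<Rightarrow> real) \<Rightarrow> bool" where
  "test_fun a b \<psi> \<longleftrightarrow>
     (\<forall>n x. ((deriv ^^ n) \<psi>) differentiable (at x)) \<and>
     (\<exists>c d. a < c \<and> d < b \<and> (\<forall>x. x \<notin> {c..d} \<longrightarrow> \<psi> x = 0))"

definition weak_deriv :: "real \<Rightarrow> real \<Rightarrow> (real \<Rightarrow> complex) \<Rightarrow> (real \<Rightarrow> complex) \<Rightarrow> bool" where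
  "weak_deriv a b f g \<longleftrightarrow>
     (\<forall>\<psi>. test_fun a b \<psi> \<longrightarrow>
        (LINT x:{a..b}|lborel. f x * complex_of_real (deriv \<psi> x))
          = - (LINT x:{a..b}|lborel. g x * complex_of_real (\<psi> x)))"

text \<open>H1(a,b) with derivative g; f is taken to be the continuous representative on [a,b].\<close>
definition H1_with :: "real \<Rightarrow> real \<Rightarrow> (real \<Rightarrow> complex) \<Rightarrow> (real \<Rightarrow> complex) \<Rightarrow> bool" where
  "H1_with a b f g \<longleftrightarrow>
     L2_on a b f \<and> continuous_on {a..b} f \<and> L2_on a b g \<and> weak_deriv a b f g"

definition H1 :: "real \<Rightarrow> real \<Rightarrow> (real \<Rightarrow> complex) \<Rightarrow> bool" where
  "H1 a b f \<longleftrightarrow> (\<exists>g. H1_with a b f g)"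

definition H10 :: "real \<Rightarrow> (real \<Rightarrow> complex) \<Rightarrow> (real \<Rightarrow> complex) \<Rightarrow> bool" where
  "H10 L u v \<longleftrightarrow> H1 (-L) 0 u \<and> H1 0 L v \<and> u (-L) = 0 \<and> v L = 0 \<and> u 0 = v 0"

end

theory Submission
  imports Defs
begin

(* An element of the kernel has U = i lam u, and the memory equation is solved pointwise by
   phi = mu U / (i lam + xi^2 + eta). The string equations then become u'' = kappa u with
   kappa = (- lam^2 rho + i lam C c) / k, where c = int mu^2 / (i lam + xi^2 + eta) has positive
   real part when lam <> 0. Multiplying by the conjugate of u and integrating by parts on both
   strings, the transmission conditions cancel the interface terms: the imaginary part gives
   lam C Re c (|u|^2 + |v|^2) = 0 and, for lam = 0, the real part gives k1 |u'|^2 + k2 |v'|^2 = 0.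
   Either way u = v = 0, hence U = V = 0 and phi = 0. The weak derivatives of the domain are
   turned into classical ones with test functions built from exp (-1/t). *)

definition flat_exp :: "nat \<Rightarrow> real \<Rightarrow> real" where
  "flat_exp n t = (if t > 0 then exp (- 1 / t) / t ^ n else 0)"

lemma has_real_derivative_flat_exp_0: "(flat_exp n has_real_derivative 0) (at 0)"
proof -
  have right: "((\<lambda>y. flat_exp n y / y) \<longlongrightarrow> 0) (at_right 0)"
  proof (rule Lim_transform_eventually)
    show "((\<lambda>y::real. inverse y ^ (n + 1) / exp (inverse y)) \<longlongrightarrow> 0) (at_right 0)"
      using filterlim_compose[OF tendsto_power_div_exp_0 filterlim_inverse_at_top_right, of "n + 1"] by simp
    show "\<forall>\<^sub>F y in at_right 0. inverse y ^ (n + 1) / exp (inverse y) = flat_exp n y / y"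
      by (rule eventually_mono[OF eventually_at_right_less])
        (auto simp: flat_exp_def exp_minus divide_inverse power_inverse)
  qed
  have left: "((\<lambda>y. flat_exp n y / y) \<longlongrightarrow> 0) (at_left 0)"
  proof (rule Lim_transform_eventually[OF tendsto_const])
    show "\<forall>\<^sub>F y in at_left 0. 0 = flat_exp n y / y"
      by (rule eventually_mono[OF eventually_at_left_real[where b = "-1"]]) (auto simp: flat_exp_def)
  qed
  have "((\<lambda>y. (flat_exp n y - flat_exp n 0) / (y - 0)) \<longlongrightarrow> 0) (at 0)"
    using filterlim_split_at[OF left right] by (simp add: flat_exp_def)
  then show ?thesis
    by (simp add: has_field_derivative_iff)
qed

lemma has_real_derivative_flat_exp:
  "(flat_exp n has_real_derivative flat_exp (n + 2) t - n * flat_exp (n + 1) t) (at t)"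
proof (cases t "0 :: real" rule: linorder_cases)
  case less
  have "((\<lambda>s. 0) has_real_derivative flat_exp (n + 2) t - n * flat_exp (n + 1) t) (at t)"
    using less by (simp add: flat_exp_def)
  then show ?thesis
    by (rule has_field_derivative_transform_within_open[where S = "{..<0}"])
      (use less in \<open>auto simp: flat_exp_def\<close>)
next
  case equal
  then show ?thesis
    using has_real_derivative_flat_exp_0 by (simp add: flat_exp_def)
next
  case greater
  have "((\<lambda>s. exp (- 1 / s) / s ^ n) has_real_derivative flat_exp (n + 2) t - n * flat_exp (n + 1) t) (at t)"
  proof (rule DERIV_cong[OF DERIV_divide])
    show "((\<lambda>s. exp (- 1 / s)) has_real_derivative exp (- 1 / t) / t\<^sup>2) (at t)"
      using greater by (auto intro!: derivative_eq_intros simp: power2_eq_square field_simps)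
    show "((\<lambda>s. s ^ n) has_real_derivative n * t ^ n / t) (at t)"
      using DERIV_pow[of n t] greater by (cases n) simp_all
    show "(exp (- 1 / t) / t\<^sup>2 * t ^ n - exp (- 1 / t) * (n * t ^ n / t)) / (t ^ n * t ^ n)
        = flat_exp (n + 2) t - n * flat_exp (n + 1) t"
      using greater by (simp add: flat_exp_def field_simps power2_eq_square)
  qed (use greater in simp)
  then show ?thesis
    by (rule has_field_derivative_transform_within_open[where S = "{0<..}"])
      (use greater in \<open>auto simp: flat_exp_def\<close>)
qed

lemma flat_exp_chain [derivative_intros]:
  "(g has_real_derivative g') (at x within S) \<Longrightarrow>
    ((\<lambda>x. flat_exp n (g x)) has_real_derivative (flat_exp (n + 2) (g x) - n * flat_exp (n + 1) (g x)) * g')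
      (at x within S)"
  using DERIV_chain'[OF _ has_real_derivative_flat_exp] by (simp add: mult.commute)

lemma flat_exp_pos: "t > 0 \<Longrightarrow> flat_exp n t > 0"
  and flat_exp_eq_0: "t \<le> 0 \<Longrightarrow> flat_exp n t = 0"
  and flat_exp_nonneg: "flat_exp n t \<ge> 0"
  by (simp_all add: flat_exp_def)

definition step_denom :: "real \<Rightarrow> real" where
  "step_denom t = flat_exp 0 (1 + t) + flat_exp 0 (1 - t)"

definition smooth_step :: "real \<Rightarrow> real" where
  "smooth_step t = flat_exp 0 (1 + t) / step_denom t"

lemma step_denom_pos: "step_denom t > 0"
  using flat_exp_pos[where n = 0 and t = "1 + t"] flat_exp_pos[where n = 0 and t = "1 - t"]
    flat_exp_nonneg[where n = 0 and t = "1 + t"] flat_exp_nonneg[where n = 0 and t = "1 - t"]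
  by (cases "t > -1") (auto simp: step_denom_def)

lemma smooth_step_eq_0: "t \<le> -1 \<Longrightarrow> smooth_step t = 0"
  by (simp add: smooth_step_def flat_exp_eq_0)

lemma smooth_step_eq_1: "t \<ge> 1 \<Longrightarrow> smooth_step t = 1"
  using flat_exp_pos[where n = 0 and t = "1 + t"] by (simp add: smooth_step_def step_denom_def flat_exp_eq_0)

text \<open>This class is closed under differentiation, which proves smoothness of the step function
  without a Leibniz rule for higher derivatives.\<close>

inductive_set step_terms :: "(real \<Rightarrow> real) set" where
  const: "(\<lambda>t. c) \<in> step_terms"
| flat: "(\<lambda>t. flat_exp n (a * t + b)) \<in> step_terms"
| inverse_denom: "(\<lambda>t. 1 / step_denom (a * t + b)) \<in> step_terms"
| add: "f \<in> step_terms \<Longrightarrow> g \<in> step_terms \<Longrightarrow> (\<lambda>t. f t + g t) \<in> step_terms"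
| mult: "f \<in> step_terms \<Longrightarrow> g \<in> step_terms \<Longrightarrow> (\<lambda>t. f t * g t) \<in> step_terms"

lemma inverse_step_denom_has_derivative:
  "\<exists>f'\<in>step_terms. \<forall>x. ((\<lambda>t. 1 / step_denom (a * t + b)) has_real_derivative f' x) (at x)"
proof -
  define D' where "D' t = flat_exp 2 (a * t + (1 + b)) * a + flat_exp 2 ((- a) * t + (1 - b)) * (- a)" for t
  define F' where "F' t = (- 1) * (D' t * ((1 / step_denom (a * t + b)) * (1 / step_denom (a * t + b))))" for t
  have "((\<lambda>t. step_denom (a * t + b)) has_real_derivative D' x) (at x)" for x
    unfolding step_denom_def D'_def by (auto intro!: derivative_eq_intros simp: algebra_simps numeral_2_eq_2)
  then have "((\<lambda>t. 1 / step_denom (a * t + b)) has_real_derivative F' x) (at x)" for x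
    using step_denom_pos[of "a * x + b"]
    by (auto intro!: derivative_eq_intros simp: F'_def field_simps power2_eq_square)
  moreover have "F' \<in> step_terms"
    unfolding F'_def[abs_def] D'_def by (intro step_terms.intros)
  ultimately show ?thesis by blast
qed

lemma step_terms_has_derivative:
  "f \<in> step_terms \<Longrightarrow> \<exists>f'\<in>step_terms. \<forall>x. (f has_real_derivative f' x) (at x)"
proof (induction rule: step_terms.induct)
  case (const c)
  show ?case by (rule bexI[of _ "\<lambda>t. 0"]) (auto intro: step_terms.const)
next
  case (flat n a b)
  define F' where "F' t = (flat_exp (n + 2) (a * t + b) + (- n) * flat_exp (n + 1) (a * t + b)) * a" for t
  have "((\<lambda>t. flat_exp n (a * t + b)) has_real_derivative F' x) (at x)" for x
    unfolding F'_def by (auto intro!: derivative_eq_intros)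
  moreover have "F' \<in> step_terms"
    unfolding F'_def[abs_def] by (intro step_terms.intros)
  ultimately show ?case by blast
next
  case (inverse_denom a b)
  show ?case by (rule inverse_step_denom_has_derivative)
next
  case (add f g)
  then obtain f' g' where "f' \<in> step_terms" "g' \<in> step_terms"
    "\<forall>x. (f has_real_derivative f' x) (at x)" "\<forall>x. (g has_real_derivative g' x) (at x)"
    by blast
  then show ?case
    by (intro bexI[of _ "\<lambda>t. f' t + g' t"]) (auto intro!: derivative_eq_intros step_terms.add)
next
  case (mult f g)
  then obtain f' g' where "f' \<in> step_terms" "g' \<in> step_terms"
    "\<forall>x. (f has_real_derivative f' x) (at x)" "\<forall>x. (g has_real_derivative g' x) (at x)"
    by blast
  then show ?case using mult.hyps
    by (intro bexI[of _ "\<lambda>t. f' t * g t + f t * g' t"])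
      (auto intro!: derivative_eq_intros step_terms.add step_terms.mult)
qed

lemma step_terms_smooth:
  assumes "f \<in> step_terms"
  shows "((deriv ^^ n) f) differentiable (at x)"
proof -
  have deriv_closed: "(\<forall>x. g differentiable (at x)) \<and> deriv g \<in> step_terms" if g: "g \<in> step_terms" for g
  proof -
    obtain g' where "g' \<in> step_terms" "\<And>x. (g has_real_derivative g' x) (at x)"
      using step_terms_has_derivative[OF g] by blast
    moreover from this have "deriv g = g'" using DERIV_imp_deriv by blast
    ultimately show ?thesis using real_differentiable_def by blast
  qed
  have "(deriv ^^ n) f \<in> step_terms"
    by (induction n) (use assms deriv_closed in auto)
  then show ?thesis using deriv_closed by blast
qed

lemma smooth_step_affine_in_step_terms: "(\<lambda>t. smooth_step (a * t + b)) \<in> step_terms"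
proof -
  have "(\<lambda>t. flat_exp 0 (a * t + (1 + b)) * (1 / step_denom (a * t + b))) \<in> step_terms"
    by (intro step_terms.intros)
  then show ?thesis by (simp add: smooth_step_def algebra_simps)
qed

lemma smooth_step_in_step_terms: "smooth_step \<in> step_terms"
  using smooth_step_affine_in_step_terms[of 1 0] by simp

lemma has_real_derivative_smooth_step: "(smooth_step has_real_derivative deriv smooth_step x) (at x)"
  using step_terms_smooth[OF smooth_step_in_step_terms, of 0 x]
  by (simp add: DERIV_deriv_iff_real_differentiable)

lemma continuous_on_deriv_smooth_step: "continuous_on S (deriv smooth_step)"
  using step_terms_smooth[OF smooth_step_in_step_terms, of 1]
  by (auto intro!: continuous_at_imp_continuous_on differentiable_imp_continuous_within)

lemma deriv_smooth_step_eq_0: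
  assumes "\<bar>t\<bar> > 1"
  shows "deriv smooth_step t = 0"
proof -
  have "(smooth_step has_real_derivative 0) (at t)"
  proof (cases "t > 1")
    case True
    show ?thesis
      by (rule has_field_derivative_transform_within_open[OF DERIV_const, where S = "{1<..}"])
        (use True smooth_step_eq_1 in auto)
  next
    case False
    with assms have "t < -1" by auto
    show ?thesis
      by (rule has_field_derivative_transform_within_open[OF DERIV_const, where S = "{..<-1}"])
        (use \<open>t < -1\<close> smooth_step_eq_0 in auto)
  qed
  then show ?thesis by (rule DERIV_imp_deriv)
qed

lemma deriv_smooth_step_bounded: "\<exists>M>0. \<forall>s. \<bar>deriv smooth_step s\<bar> \<le> M"
proof -
  have "bounded (deriv smooth_step ` {-1..1})"
    by (intro compact_imp_bounded compact_continuous_image continuous_on_deriv_smooth_step compact_Icc)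
  then obtain M where M: "M > 0" "\<And>s. s \<in> {-1..1} \<Longrightarrow> \<bar>deriv smooth_step s\<bar> \<le> M"
    by (auto simp: bounded_pos)
  have "\<bar>deriv smooth_step s\<bar> \<le> M" for s
    using M deriv_smooth_step_eq_0[of s] by (cases "\<bar>s\<bar> > 1") (auto simp: abs_le_iff not_less)
  with M(1) show ?thesis by blast
qed

definition plateau :: "real \<Rightarrow> real \<Rightarrow> real \<Rightarrow> real \<Rightarrow> real" where
  "plateau \<epsilon> x1 x2 t = smooth_step ((t - x1) / \<epsilon>) - smooth_step ((t - x2) / \<epsilon>)"

lemma plateau_in_step_terms: "plateau \<epsilon> x1 x2 \<in> step_terms"
proof -
  have "plateau \<epsilon> x1 x2 =
      (\<lambda>t. smooth_step ((1 / \<epsilon>) * t + (- x1 / \<epsilon>)) + (- 1) * smooth_step ((1 / \<epsilon>) * t + (- x2 / \<epsilon>)))"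
    by (rule ext) (simp add: plateau_def diff_divide_distrib)
  also have "\<dots> \<in> step_terms"
    by (intro step_terms.intros smooth_step_affine_in_step_terms)
  finally show ?thesis .
qed

lemma test_fun_plateau:
  assumes "\<epsilon> > 0" "lo < x1 - \<epsilon>" "x2 + \<epsilon> < hi" "x1 \<le> x2"
  shows "test_fun lo hi (plateau \<epsilon> x1 x2)"
proof -
  have "plateau \<epsilon> x1 x2 t = 0" if "t \<notin> {x1 - \<epsilon>..x2 + \<epsilon>}" for t
  proof -
    from that consider "t < x1 - \<epsilon>" | "t > x2 + \<epsilon>" by force
    then show ?thesis
    proof cases
      case 1
      then have "(t - x1) / \<epsilon> \<le> -1" "(t - x2) / \<epsilon> \<le> -1" using assms by (auto simp: field_simps)
      then show ?thesis by (simp add: plateau_def smooth_step_eq_0)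
    next
      case 2
      then have "(t - x1) / \<epsilon> \<ge> 1" "(t - x2) / \<epsilon> \<ge> 1" using assms by (auto simp: field_simps)
      then show ?thesis by (simp add: plateau_def smooth_step_eq_1)
    qed
  qed
  then show ?thesis
    unfolding test_fun_def using assms step_terms_smooth[OF plateau_in_step_terms] by blast
qed

lemma has_real_derivative_smooth_step_scaled:
  "((\<lambda>t. smooth_step ((t - x) / \<epsilon>)) has_real_derivative deriv smooth_step ((t - x) / \<epsilon>) / \<epsilon>) (at t)"
proof -
  have "((\<lambda>t. (t - x) / \<epsilon>) has_real_derivative 1 / \<epsilon>) (at t)"
    using DERIV_cdivide[OF DERIV_diff[OF DERIV_ident DERIV_const]] by simp
  from DERIV_chain'[OF this has_real_derivative_smooth_step] show ?thesis by simp
qed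

lemma deriv_plateau:
  "deriv (plateau \<epsilon> x1 x2) t = deriv smooth_step ((t - x1) / \<epsilon>) / \<epsilon> - deriv smooth_step ((t - x2) / \<epsilon>) / \<epsilon>"
  unfolding plateau_def[abs_def]
  by (intro DERIV_imp_deriv DERIV_diff has_real_derivative_smooth_step_scaled)

lemma has_integral_deriv_smooth_step_scaled:
  assumes "\<epsilon> > 0"
  shows "((\<lambda>t. deriv smooth_step ((t - x) / \<epsilon>) / \<epsilon>) has_integral 1) {x - \<epsilon>..x + \<epsilon>}"
proof -
  have "((\<lambda>t. deriv smooth_step ((t - x) / \<epsilon>) / \<epsilon>) has_integral
      smooth_step ((x + \<epsilon> - x) / \<epsilon>) - smooth_step ((x - \<epsilon> - x) / \<epsilon>)) {x - \<epsilon>..x + \<epsilon>}"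
    using assms has_real_derivative_smooth_step_scaled
    by (intro fundamental_theorem_of_calculus)
      (auto simp: has_real_derivative_iff_has_vector_derivative[symmetric] intro: has_field_derivative_at_within)
  then show ?thesis
    using assms smooth_step_eq_1[of 1] smooth_step_eq_0[of "-1"] by simp
qed

lemma mollifier_error_bound:
  fixes w :: "real \<Rightarrow> complex"
  assumes w: "continuous_on {lo..hi} w" and \<epsilon>: "\<epsilon> > 0" and sub: "{x - \<epsilon>..x + \<epsilon>} \<subseteq> {lo..hi}"
    and M: "\<And>s. \<bar>deriv smooth_step s\<bar> \<le> M"
    and osc: "\<And>t. t \<in> {x - \<epsilon>..x + \<epsilon>} \<Longrightarrow> norm (w t - w x) \<le> \<eta>"
  shows "norm (integral {lo..hi} (\<lambda>t. w t * of_real (deriv smooth_step ((t - x) / \<epsilon>) / \<epsilon>)) - w x) \<le> 2 * M * \<eta>"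
proof -
  let ?k = "\<lambda>t. deriv smooth_step ((t - x) / \<epsilon>) / \<epsilon>"
  let ?F = "\<lambda>t. w t * of_real (?k t)"
  let ?I = "integral {x - \<epsilon>..x + \<epsilon>} ?F"
  have int: "?F integrable_on {x - \<epsilon>..x + \<epsilon>}"
    by (intro integrable_continuous_interval continuous_intros continuous_on_subset[OF w sub]
        continuous_on_compose2[OF continuous_on_deriv_smooth_step]) (use \<epsilon> in auto)
  have outside: "?F t = 0" if "t \<notin> {x - \<epsilon>..x + \<epsilon>}" for t
  proof -
    have "\<bar>(t - x) / \<epsilon>\<bar> > 1" using that \<epsilon> by (auto simp: abs_if field_simps)
    then show ?thesis by (simp add: deriv_smooth_step_eq_0)
  qed
  have "integral {lo..hi} ?F = ?I"
    by (rule integral_unique[OF has_integral_on_superset[OF integrable_integral[OF int] outside sub]])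
  have "((\<lambda>t. w x * of_real (?k t)) has_integral w x) {x - \<epsilon>..x + \<epsilon>}"
    using has_integral_mult_right[OF has_integral_of_real[OF has_integral_deriv_smooth_step_scaled[OF \<epsilon>, of x]],
        of "w x"]
    by (simp only: of_real_1 mult_1_right)
  then have diff: "((\<lambda>t. ?F t - w x * of_real (?k t)) has_integral ?I - w x) (cbox (x - \<epsilon>) (x + \<epsilon>))"
    unfolding box_real by (rule has_integral_diff[OF integrable_integral[OF int]])
  have "\<eta> \<ge> 0" "M \<ge> 0"
    using osc[of x] M[of 0] \<epsilon> by (auto intro: order_trans[OF abs_ge_zero])
  have bound: "norm (?F t - w x * of_real (?k t)) \<le> \<eta> * (M / \<epsilon>)" if "t \<in> cbox (x - \<epsilon>) (x + \<epsilon>)" for t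
  proof -
    have "norm (?F t - w x * of_real (?k t)) = norm (w t - w x) * \<bar>?k t\<bar>"
      by (simp only: left_diff_distrib[symmetric] norm_mult norm_of_real)
    also have "\<dots> \<le> \<eta> * (M / \<epsilon>)"
      using that osc[of t] M[of "(t - x) / \<epsilon>"] \<epsilon> \<open>\<eta> \<ge> 0\<close>
      by (intro mult_mono) (auto simp: divide_right_mono)
    finally show ?thesis .
  qed
  from has_integral_bound[OF _ diff bound] \<epsilon> \<open>\<eta> \<ge> 0\<close> \<open>M \<ge> 0\<close>
  have "norm (?I - w x) \<le> \<eta> * (M / \<epsilon>) * (2 * \<epsilon>)" by simp
  also have "\<dots> = 2 * M * \<eta>" using \<epsilon> by simp
  finally show ?thesis unfolding \<open>integral {lo..hi} ?F = ?I\<close> .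
qed

lemma mollifier_tendsto:
  fixes w :: "real \<Rightarrow> complex"
  assumes w: "continuous_on {lo..hi} w" and x: "lo < x" "x < hi"
  shows "((\<lambda>\<epsilon>. integral {lo..hi} (\<lambda>t. w t * of_real (deriv smooth_step ((t - x) / \<epsilon>) / \<epsilon>))) \<longlongrightarrow> w x)
           (at_right 0)"
proof (rule tendstoI)
  fix e :: real
  assume e: "e > 0"
  obtain M where M: "M > 0" "\<And>s. \<bar>deriv smooth_step s\<bar> \<le> M"
    using deriv_smooth_step_bounded by blast
  have "e / (4 * M) > 0" using e M(1) by simp
  then obtain d where d: "d > 0" "\<And>t. t \<in> {lo..hi} \<Longrightarrow> dist t x < d \<Longrightarrow> dist (w t) (w x) < e / (4 * M)"
    using w x unfolding continuous_on_iff by (meson atLeastAtMost_iff less_imp_le)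
  define \<delta> where "\<delta> = min d (min (x - lo) (hi - x))"
  have "dist (integral {lo..hi} (\<lambda>t. w t * of_real (deriv smooth_step ((t - x) / \<epsilon>) / \<epsilon>))) (w x) < e"
    if \<epsilon>: "0 < \<epsilon>" "\<epsilon> < \<delta>" for \<epsilon>
  proof -
    have sub: "{x - \<epsilon>..x + \<epsilon>} \<subseteq> {lo..hi}" using \<epsilon> by (auto simp: \<delta>_def)
    have "norm (w t - w x) \<le> e / (4 * M)" if "t \<in> {x - \<epsilon>..x + \<epsilon>}" for t
    proof -
      have "dist t x < d" using that \<epsilon> by (auto simp: \<delta>_def dist_real_def abs_less_iff)
      with that sub show ?thesis using d(2)[of t] by (auto simp: dist_norm)
    qed
    from mollifier_error_bound[OF w \<epsilon>(1) sub M(2) this] M(1) e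
    show ?thesis by (simp add: dist_norm)
  qed
  moreover have "\<delta> > 0" using d x by (simp add: \<delta>_def)
  ultimately show "\<forall>\<^sub>F \<epsilon> in at_right 0.
      dist (integral {lo..hi} (\<lambda>t. w t * of_real (deriv smooth_step ((t - x) / \<epsilon>) / \<epsilon>))) (w x) < e"
    unfolding eventually_at_right_field by blast
qed

text \<open>du Bois-Reymond lemma: the derivative of the test function plateau e x1 x2 is the difference
  of the mollifiers at x1 and x2.\<close>

lemma weak_derivative_zero_constant:
  fixes g :: "real \<Rightarrow> complex"
  assumes g: "continuous_on {lo..hi} g"
    and orth: "\<And>\<psi>. test_fun lo hi \<psi> \<Longrightarrow> integral {lo..hi} (\<lambda>t. g t * of_real (deriv \<psi> t)) = 0"
    and x: "lo < x1" "x1 \<le> x2" "x2 < hi"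
  shows "g x1 = g x2"
proof -
  let ?J = "\<lambda>x \<epsilon>. integral {lo..hi} (\<lambda>t. g t * of_real (deriv smooth_step ((t - x) / \<epsilon>) / \<epsilon>))"
  have "((\<lambda>\<epsilon>. ?J x1 \<epsilon> - ?J x2 \<epsilon>) \<longlongrightarrow> g x1 - g x2) (at_right 0)"
    using x by (intro tendsto_diff mollifier_tendsto[OF g]) auto
  moreover have "?J x1 \<epsilon> - ?J x2 \<epsilon> = 0" if \<epsilon>: "0 < \<epsilon>" "\<epsilon> < min (x1 - lo) (hi - x2)" for \<epsilon>
  proof -
    have cont: "continuous_on {lo..hi} (\<lambda>t. g t * of_real (deriv smooth_step ((t - x) / \<epsilon>) / \<epsilon>))" for x
      by (intro continuous_intros g continuous_on_compose2[OF continuous_on_deriv_smooth_step]) (use \<epsilon> in auto)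
    have "?J x1 \<epsilon> - ?J x2 \<epsilon> = integral {lo..hi} (\<lambda>t. g t * of_real (deriv smooth_step ((t - x1) / \<epsilon>) / \<epsilon>)
        - g t * of_real (deriv smooth_step ((t - x2) / \<epsilon>) / \<epsilon>))"
      by (rule integral_diff[symmetric]; rule integrable_continuous_interval[OF cont])
    also have "\<dots> = integral {lo..hi} (\<lambda>t. g t * of_real (deriv (plateau \<epsilon> x1 x2) t))"
      by (simp only: deriv_plateau of_real_diff right_diff_distrib)
    also have "\<dots> = 0"
      using \<epsilon> x by (intro orth test_fun_plateau) auto
    finally show ?thesis .
  qed
  then have "\<forall>\<^sub>F \<epsilon> in at_right 0. ?J x1 \<epsilon> - ?J x2 \<epsilon> = 0"
    unfolding eventually_at_right_field using x by (intro exI[of _ "min (x1 - lo) (hi - x2)"]) auto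
  ultimately have "((\<lambda>\<epsilon>. 0) \<longlongrightarrow> g x1 - g x2) (at_right (0::real))"
    by (rule Lim_transform_eventually)
  then show ?thesis
    by (simp add: tendsto_const_iff)
qed

lemma test_fun_derivative:
  assumes "test_fun a b \<psi>"
  shows "(\<psi> has_real_derivative deriv \<psi> x) (at x)"
    and "continuous_on S \<psi>" and "continuous_on S (deriv \<psi>)"
proof -
  have d0: "\<psi> differentiable (at x)" and d1: "deriv \<psi> differentiable (at x)" for x
    using assms unfolding test_fun_def by (metis funpow_0, metis funpow_0 funpow_Suc_right o_apply)
  show "(\<psi> has_real_derivative deriv \<psi> x) (at x)"
    using d0 by (simp add: DERIV_deriv_iff_real_differentiable)
  show "continuous_on S \<psi>" "continuous_on S (deriv \<psi>)"
    using d0 d1 by (auto intro!: continuous_at_imp_continuous_on differentiable_imp_continuous_within)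
qed

lemma integral_mult_deriv_test_fun:
  fixes H h :: "real \<Rightarrow> complex"
  assumes H: "continuous_on {lo..hi} H" and dH: "\<And>x. x \<in> {lo<..<hi} \<Longrightarrow> (H has_vector_derivative h x) (at x)"
    and \<psi>: "test_fun lo hi \<psi>"
  shows "integral {lo..hi} (\<lambda>x. H x * of_real (deriv \<psi> x)) = - integral {lo..hi} (\<lambda>x. h x * of_real (\<psi> x))"
proof (cases "lo \<le> hi")
  case True
  obtain c d where "lo < c" "d < hi" "\<And>x. x \<notin> {c..d} \<Longrightarrow> \<psi> x = 0"
    using \<psi> unfolding test_fun_def by blast
  then have boundary: "\<psi> lo = 0" "\<psi> hi = 0" by auto
  have cont: "continuous_on {lo..hi} (\<lambda>x. complex_of_real (\<psi> x))"
    using test_fun_derivative(2)[OF \<psi>] by (intro continuous_intros)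
  have d\<psi>: "((\<lambda>x. complex_of_real (\<psi> x)) has_vector_derivative of_real (deriv \<psi> x)) (at x)"
    if "x \<in> {lo<..<hi}" for x
    by (intro has_vector_derivative_of_real test_fun_derivative(1)[OF \<psi>])
  have "((\<lambda>x. H x * of_real (deriv \<psi> x)) has_integral integral {lo..hi} (\<lambda>x. H x * of_real (deriv \<psi> x))) {lo..hi}"
    using test_fun_derivative(3)[OF \<psi>] by (intro integrable_integral integrable_continuous_interval continuous_intros H)
  with boundary have "((\<lambda>x. H x * of_real (deriv \<psi> x)) has_integral
      H hi * of_real (\<psi> hi) - H lo * of_real (\<psi> lo) - - integral {lo..hi} (\<lambda>x. H x * of_real (deriv \<psi> x))) {lo..hi}"
    by simp
  then have "((\<lambda>x. h x * of_real (\<psi> x)) has_integral - integral {lo..hi} (\<lambda>x. H x * of_real (deriv \<psi> x))) {lo..hi}"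
    using integration_by_parts_interior[OF bounded_bilinear_mult True H cont dH d\<psi>] by simp
  then show ?thesis by (simp add: integral_unique)
qed simp

lemma has_vector_derivative_of_weak_derivative:
  fixes w h :: "real \<Rightarrow> complex"
  assumes w: "continuous_on {lo..hi} w" and h: "continuous_on {lo..hi} h"
    and weak: "\<And>\<psi>. test_fun lo hi \<psi> \<Longrightarrow>
       integral {lo..hi} (\<lambda>x. w x * of_real (deriv \<psi> x)) = - integral {lo..hi} (\<lambda>x. h x * of_real (\<psi> x))"
    and x: "lo < x" "x < hi"
  shows "(w has_vector_derivative h x) (at x)"
proof -
  define H where "H = (\<lambda>y. integral {lo..y} h)"
  have H: "continuous_on {lo..hi} H"
    unfolding H_def by (rule indefinite_integral_continuous_1[OF integrable_continuous_interval[OF h]])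
  have dH: "(H has_vector_derivative h y) (at y)" if "y \<in> {lo<..<hi}" for y
    using integral_has_vector_derivative[OF h, of y] at_within_Icc_at[of lo y hi] that by (simp add: H_def)
  have "integral {lo..hi} (\<lambda>t. (w t - H t) * of_real (deriv \<psi> t)) = 0" if \<psi>: "test_fun lo hi \<psi>" for \<psi>
  proof -
    have "integral {lo..hi} (\<lambda>t. (w t - H t) * of_real (deriv \<psi> t))
        = integral {lo..hi} (\<lambda>t. w t * of_real (deriv \<psi> t)) - integral {lo..hi} (\<lambda>t. H t * of_real (deriv \<psi> t))"
      unfolding left_diff_distrib using test_fun_derivative(3)[OF \<psi>]
      by (intro integral_diff integrable_continuous_interval continuous_intros w H)
    moreover note weak[OF \<psi>] integral_mult_deriv_test_fun[OF H dH \<psi>]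
    ultimately show ?thesis
      by simp
  qed
  moreover have "continuous_on {lo..hi} (\<lambda>t. w t - H t)"
    by (intro continuous_intros w H)
  ultimately have eq: "w a - H a = w b - H b" if "lo < a" "a \<le> b" "b < hi" for a b
    using weak_derivative_zero_constant[where g = "\<lambda>t. w t - H t"] that by blast
  have const: "H y + (w x - H x) = w y" if "y \<in> {lo<..<hi}" for y
    using eq[of y x] eq[of x y] that x by (cases "y \<le> x") (auto simp: algebra_simps)
  have "((\<lambda>y. H y + (w x - H x)) has_vector_derivative h x) (at x)"
    using dH[of x] x by (intro derivative_eq_intros) auto
  then show ?thesis
    by (rule has_vector_derivative_transform_within_open[where S = "{lo<..<hi}"]) (use x const in auto)
qed

lemma weak_deriv_imp_has_vector_derivative:
  fixes f g h :: "real \<Rightarrow> complex"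
  assumes weak: "weak_deriv lo hi f g" and f: "continuous_on {lo..hi} f" and h: "continuous_on {lo..hi} h"
    and g: "(\<lambda>x. indicator {lo..hi} x *\<^sub>R g x) \<in> borel_measurable lborel"
    and ae: "AE x in lborel. x \<in> {lo..hi} \<longrightarrow> g x = h x"
    and x: "lo < x" "x < hi"
  shows "(f has_vector_derivative h x) (at x)"
proof (rule has_vector_derivative_of_weak_derivative[OF f h _ x])
  fix \<psi> assume \<psi>: "test_fun lo hi \<psi>"
  have f\<psi>: "continuous_on {lo..hi} (\<lambda>x. f x * of_real (deriv \<psi> x))"
    using test_fun_derivative(3)[OF \<psi>] by (intro continuous_intros f)
  have h\<psi>: "continuous_on {lo..hi} (\<lambda>x. h x * of_real (\<psi> x))"
    using test_fun_derivative(2)[OF \<psi>] by (intro continuous_intros h)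
  have "(\<lambda>x. indicator {lo..hi} x *\<^sub>R g x * of_real (\<psi> x)) \<in> borel_measurable lborel"
    using g test_fun_derivative(2)[OF \<psi>, of UNIV] by (measurable, auto intro: borel_measurable_continuous_onI)
  then have "(LINT x:{lo..hi}|lborel. g x * of_real (\<psi> x)) = (LINT x:{lo..hi}|lborel. h x * of_real (\<psi> x))"
    unfolding set_lebesgue_integral_def
    using borel_integrable_atLeastAtMost'[OF h\<psi>] ae
    by (intro integral_cong_AE) (auto simp: set_integrable_def mult.assoc intro: borel_measurable_integrable
        elim!: eventually_mono split: split_indicator)
  moreover have "(LINT x:{lo..hi}|lborel. f x * of_real (deriv \<psi> x)) = integral {lo..hi} (\<lambda>x. f x * of_real (deriv \<psi> x))"
    "(LINT x:{lo..hi}|lborel. h x * of_real (\<psi> x)) = integral {lo..hi} (\<lambda>x. h x * of_real (\<psi> x))"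
    by (rule set_borel_integral_eq_integral(2)[OF borel_integrable_atLeastAtMost'], fact)+
  ultimately show "integral {lo..hi} (\<lambda>x. f x * of_real (deriv \<psi> x)) = - integral {lo..hi} (\<lambda>x. h x * of_real (\<psi> x))"
    using weak \<psi> unfolding weak_deriv_def by simp
qed

lemma energy_identity:
  fixes u u1 :: "real \<Rightarrow> complex" and \<kappa> :: complex
  assumes "lo \<le> hi" and u: "continuous_on {lo..hi} u" and u1: "continuous_on {lo..hi} u1"
    and du: "\<And>x. x \<in> {lo<..<hi} \<Longrightarrow> (u has_vector_derivative u1 x) (at x)"
    and du1: "\<And>x. x \<in> {lo<..<hi} \<Longrightarrow> (u1 has_vector_derivative \<kappa> * u x) (at x)"
  shows "\<kappa> * of_real (integral {lo..hi} (\<lambda>x. (cmod (u x))\<^sup>2)) =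
     u1 hi * cnj (u hi) - u1 lo * cnj (u lo) - of_real (integral {lo..hi} (\<lambda>x. (cmod (u1 x))\<^sup>2))"
proof -
  have cnj_bilinear: "bounded_bilinear (\<lambda>a b::complex. a * cnj b)"
  proof
    show "\<exists>K. \<forall>a b::complex. norm (a * cnj b) \<le> norm a * norm b * K"
      by (rule exI[of _ 1]) (simp add: norm_mult)
  qed (auto simp: algebra_simps scaleR_conv_of_real)
  have sq: "z * cnj z = of_real ((cmod z)\<^sup>2)" for z
    by (simp add: complex_mult_cnj cmod_def)
  have "((\<lambda>x. (cmod (u1 x))\<^sup>2) has_integral integral {lo..hi} (\<lambda>x. (cmod (u1 x))\<^sup>2)) {lo..hi}"
    by (intro integrable_integral integrable_continuous_interval continuous_intros u1)
  from has_integral_of_real[OF this] have "((\<lambda>x. u1 x * cnj (u1 x)) has_integral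
      u1 hi * cnj (u hi) - u1 lo * cnj (u lo) - (u1 hi * cnj (u hi) - u1 lo * cnj (u lo)
        - of_real (integral {lo..hi} (\<lambda>x. (cmod (u1 x))\<^sup>2)))) {lo..hi}"
    unfolding sq by simp
  then have "((\<lambda>x. (\<kappa> * u x) * cnj (u x)) has_integral
      u1 hi * cnj (u hi) - u1 lo * cnj (u lo) - of_real (integral {lo..hi} (\<lambda>x. (cmod (u1 x))\<^sup>2))) {lo..hi}"
    using integration_by_parts_interior[OF cnj_bilinear assms(1) u1 u du1 du] by simp
  moreover have "((\<lambda>x. (\<kappa> * u x) * cnj (u x)) has_integral \<kappa> * of_real (integral {lo..hi} (\<lambda>x. (cmod (u x))\<^sup>2)))
      {lo..hi}"
    unfolding mult.assoc sq
    by (intro has_integral_mult_right has_integral_of_real integrable_integral integrable_continuous_interval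
        continuous_intros u)
  ultimately show ?thesis using has_integral_unique by blast
qed

definition diffusive_denom :: "real \<Rightarrow> real \<Rightarrow> real \<Rightarrow> complex" where
  "diffusive_denom lam \<eta> \<xi> = \<i> * of_real lam + of_real (\<xi>\<^sup>2 + \<eta>)"

definition diffusive_kernel :: "real \<Rightarrow> real \<Rightarrow> real \<Rightarrow> real \<Rightarrow> complex" where
  "diffusive_kernel \<alpha> lam \<eta> \<xi> = of_real (mu \<alpha> \<xi>) * (of_real (mu \<alpha> \<xi>) / diffusive_denom lam \<eta> \<xi>)"

definition diffusive_coeff :: "real \<Rightarrow> real \<Rightarrow> real \<Rightarrow> complex" where
  "diffusive_coeff \<alpha> lam \<eta> = (LINT \<xi>|lborel. diffusive_kernel \<alpha> lam \<eta> \<xi>)"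

lemma Re_diffusive_denom: "Re (diffusive_denom lam \<eta> \<xi>) = \<xi>\<^sup>2 + \<eta>"
  and Im_diffusive_denom: "Im (diffusive_denom lam \<eta> \<xi>) = lam"
  by (simp_all add: diffusive_denom_def)

lemma diffusive_denom_nonzero:
  assumes "\<xi> \<noteq> 0" "\<eta> \<ge> 0"
  shows "diffusive_denom lam \<eta> \<xi> \<noteq> 0"
proof -
  have "Re (diffusive_denom lam \<eta> \<xi>) > 0"
    using assms by (simp add: Re_diffusive_denom add_pos_nonneg)
  then show ?thesis by auto
qed

lemma borel_measurable_mu [measurable]: "mu \<alpha> \<in> borel_measurable borel"
  unfolding mu_def[abs_def] by measurable

lemma pair_sigma_finite_lborel: "pair_sigma_finite lborel lborel"
  by (simp add: pair_sigma_finite_def lborel.sigma_finite_measure_axioms)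

lemma AE_snd_nonzero: "AE z in lborel \<Otimes>\<^sub>M lborel. snd z \<noteq> (0::real)"
  by (rule pair_sigma_finite.AE_pair_measure[OF pair_sigma_finite_lborel]) (measurable, simp add: AE_lborel_singleton)

lemma memory_variable_eq_ae:
  fixes \<phi> :: "real \<Rightarrow> real \<Rightarrow> complex" and W :: "real \<Rightarrow> complex"
  assumes eq: "AE z in lborel \<Otimes>\<^sub>M lborel. fst z \<in> {a..b} \<longrightarrow>
        \<i> * of_real lam * \<phi> (fst z) (snd z)
          - (- of_real ((snd z)\<^sup>2 + \<eta>) * \<phi> (fst z) (snd z) + of_real (mu \<alpha> (snd z)) * W (fst z)) = 0"
    and \<eta>: "\<eta> \<ge> 0"
  shows "AE z in lborel \<Otimes>\<^sub>M lborel. fst z \<in> {a..b} \<longrightarrow>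
           \<phi> (fst z) (snd z) = of_real (mu \<alpha> (snd z)) * W (fst z) / diffusive_denom lam \<eta> (snd z)"
  using eq AE_snd_nonzero
proof eventually_elim
  case (elim z)
  have "diffusive_denom lam \<eta> (snd z) \<noteq> 0"
    using diffusive_denom_nonzero elim(2) \<eta> by blast
  moreover have "fst z \<in> {a..b} \<Longrightarrow>
      diffusive_denom lam \<eta> (snd z) * \<phi> (fst z) (snd z) = of_real (mu \<alpha> (snd z)) * W (fst z)"
    using elim(1) by (simp add: diffusive_denom_def algebra_simps)
  ultimately show ?case by (simp add: field_simps)
qed

lemma memory_integral_ae:
  fixes \<phi> :: "real \<Rightarrow> real \<Rightarrow> complex" and W :: "real \<Rightarrow> complex"
  assumes \<phi>: "L2_prod a b \<phi>"
    and sol: "AE z in lborel \<Otimes>\<^sub>M lborel. fst z \<in> {a..b} \<longrightarrow>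
           \<phi> (fst z) (snd z) = of_real (mu \<alpha> (snd z)) * W (fst z) / diffusive_denom lam \<eta> (snd z)"
  shows "AE x in lborel. x \<in> {a..b} \<longrightarrow>
           (LINT \<xi>|lborel. of_real (mu \<alpha> \<xi>) * \<phi> x \<xi>) = W x * diffusive_coeff \<alpha> lam \<eta>"
proof -
  have meas: "(\<lambda>z. indicator ({a..b} \<times> UNIV) z *\<^sub>R \<phi> (fst z) (snd z)) \<in> borel_measurable (lborel \<Otimes>\<^sub>M lborel)"
    using \<phi> by (simp add: L2_prod_def)
  have "AE x in lborel. AE \<xi> in lborel. x \<in> {a..b} \<longrightarrow>
           \<phi> x \<xi> = of_real (mu \<alpha> \<xi>) * W x / diffusive_denom lam \<eta> \<xi>"
    using pair_sigma_finite.AE_pair[OF pair_sigma_finite_lborel sol] by simp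
  then show ?thesis
  proof eventually_elim
    case (elim x)
    show ?case
    proof
      assume x: "x \<in> {a..b}"
      have "(\<lambda>\<xi>. (\<lambda>z. indicator ({a..b} \<times> UNIV) z *\<^sub>R \<phi> (fst z) (snd z)) (x, \<xi>)) \<in> borel_measurable lborel"
        by (rule measurable_Pair2[OF meas]) simp
      moreover have "(\<lambda>\<xi>. (\<lambda>z. indicator ({a..b} \<times> UNIV) z *\<^sub>R \<phi> (fst z) (snd z)) (x, \<xi>)) = \<phi> x"
        using x by (intro ext) (simp only: fst_conv snd_conv indicator_simps mem_Times_iff UNIV_I simp_thms scaleR_one)
      ultimately have "(\<lambda>\<xi>. \<phi> x \<xi>) \<in> borel_measurable lborel"
        by simp
      then have "(\<lambda>\<xi>. of_real (mu \<alpha> \<xi>) * \<phi> x \<xi>) \<in> borel_measurable lborel"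
        by measurable
      moreover have "(\<lambda>\<xi>. W x * diffusive_kernel \<alpha> lam \<eta> \<xi>) \<in> borel_measurable lborel"
        unfolding diffusive_kernel_def diffusive_denom_def by measurable
      ultimately have "(LINT \<xi>|lborel. of_real (mu \<alpha> \<xi>) * \<phi> x \<xi>) = (LINT \<xi>|lborel. W x * diffusive_kernel \<alpha> lam \<eta> \<xi>)"
        by (rule integral_cong_AE) (use elim x in \<open>auto simp: diffusive_kernel_def elim!: eventually_mono\<close>)
      also have "\<dots> = W x * diffusive_coeff \<alpha> lam \<eta>"
        unfolding diffusive_coeff_def by (rule integral_mult_right_zero)
      finally show "(LINT \<xi>|lborel. of_real (mu \<alpha> \<xi>) * \<phi> x \<xi>) = W x * diffusive_coeff \<alpha> lam \<eta>" .
    qed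
  qed
qed

lemma integrable_lborel_of_has_integral_nonneg:
  fixes f :: "real \<Rightarrow> real"
  assumes "f \<in> borel_measurable borel" "\<And>x. 0 \<le> f x" "(f has_integral I) UNIV"
  shows "integrable lborel f"
proof -
  have "integral\<^sup>N lborel f = I" by (rule nn_integral_has_integral_lborel[OF assms])
  moreover have "I \<ge> 0" using has_integral_nonneg[OF assms(3)] assms(2) by auto
  ultimately show ?thesis
    by (intro integrableI_nn_integral_finite[where x = I]) (use assms in auto)
qed

lemma integrable_powr_Icc_0_1:
  assumes "p > -1"
  shows "integrable lborel (\<lambda>x::real. if x \<in> {0..1} then x powr p else 0)"
proof (rule integrable_lborel_of_has_integral_nonneg)
  show "((\<lambda>x::real. if x \<in> {0..1} then x powr p else 0) has_integral 1 / (p + 1)) UNIV"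
    unfolding has_integral_restrict_UNIV using has_integral_powr_from_0[OF assms, of 1] by simp
qed auto

lemma integrable_powr_atLeast_1:
  assumes "p < -1"
  shows "integrable lborel (\<lambda>x::real. if x \<in> {1..} then x powr p else 0)"
proof (rule integrable_lborel_of_has_integral_nonneg)
  show "((\<lambda>x::real. if x \<in> {1..} then x powr p else 0) has_integral - 1 / (p + 1)) UNIV"
    unfolding has_integral_restrict_UNIV using has_integral_powr_to_inf[OF assms, of 1] by simp
qed auto

lemma norm_diffusive_kernel_le:
  assumes \<xi>: "\<xi> \<noteq> 0" and \<eta>: "\<eta> \<ge> 0"
  shows "lam \<noteq> 0 \<Longrightarrow> norm (diffusive_kernel \<alpha> lam \<eta> \<xi>) \<le> \<bar>\<xi>\<bar> powr (2 * \<alpha> - 1) / \<bar>lam\<bar>"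
    and "norm (diffusive_kernel \<alpha> lam \<eta> \<xi>) \<le> \<bar>\<xi>\<bar> powr (2 * \<alpha> - 3)"
proof -
  have "mu \<alpha> \<xi> * mu \<alpha> \<xi> = \<bar>\<xi>\<bar> powr (2 * \<alpha> - 1)"
    unfolding mu_def by (simp add: powr_add[symmetric])
  then have norm: "norm (diffusive_kernel \<alpha> lam \<eta> \<xi>) = \<bar>\<xi>\<bar> powr (2 * \<alpha> - 1) / cmod (diffusive_denom lam \<eta> \<xi>)"
    by (simp add: diffusive_kernel_def norm_mult norm_divide mu_def)
  have pos: "\<bar>\<xi>\<bar> powr (2 * \<alpha> - 1) > 0" using \<xi> by simp
  show "norm (diffusive_kernel \<alpha> lam \<eta> \<xi>) \<le> \<bar>\<xi>\<bar> powr (2 * \<alpha> - 1) / \<bar>lam\<bar>" if "lam \<noteq> 0"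
  proof -
    have "\<bar>lam\<bar> \<le> cmod (diffusive_denom lam \<eta> \<xi>)"
      using abs_Im_le_cmod[of "diffusive_denom lam \<eta> \<xi>"] by (simp add: Im_diffusive_denom)
    then show ?thesis
      unfolding norm using pos that by (intro divide_left_mono mult_pos_pos) auto
  qed
  have "\<xi>\<^sup>2 \<le> cmod (diffusive_denom lam \<eta> \<xi>)"
    using abs_Re_le_cmod[of "diffusive_denom lam \<eta> \<xi>"] \<eta> by (simp add: Re_diffusive_denom)
  then have "\<bar>\<xi>\<bar> powr (2 * \<alpha> - 1) / cmod (diffusive_denom lam \<eta> \<xi>) \<le> \<bar>\<xi>\<bar> powr (2 * \<alpha> - 1) / \<bar>\<xi>\<bar> powr 2"
    using pos \<xi> by (intro divide_left_mono mult_pos_pos) (auto simp: powr_numeral intro: less_le_trans)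
  also have "\<dots> = \<bar>\<xi>\<bar> powr (2 * \<alpha> - 3)"
    by (simp only: powr_diff[symmetric]) (simp add: algebra_simps)
  finally show "norm (diffusive_kernel \<alpha> lam \<eta> \<xi>) \<le> \<bar>\<xi>\<bar> powr (2 * \<alpha> - 3)"
    unfolding norm .
qed

text \<open>Near 0 the kernel is bounded by the integrable |xi|^(2 alpha - 1) / |lam|, at infinity by
  |xi|^(2 alpha - 3); this is where 0 < alpha < 1 and lam \<noteq> 0 enter.\<close>

lemma integrable_diffusive_kernel:
  assumes \<alpha>: "0 < \<alpha>" "\<alpha> < 1" and lam: "lam \<noteq> 0" and \<eta>: "\<eta> \<ge> 0"
  shows "integrable lborel (diffusive_kernel \<alpha> lam \<eta>)"
proof -
  define k where "k x = (if x \<in> {0..1} then x powr (2 * \<alpha> - 1) else 0)" for x :: real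
  define m where "m x = (if x \<in> {1..} then x powr (2 * \<alpha> - 3) else 0)" for x :: real
  define G where "G x = (k x + k (- x)) / \<bar>lam\<bar> + (m x + m (- x))" for x
  have "integrable lborel k" "integrable lborel m"
    unfolding k_def m_def using \<alpha> by (intro integrable_powr_Icc_0_1 integrable_powr_atLeast_1; simp)+
  then have G: "integrable lborel G"
    unfolding G_def using lborel_integrable_real_affine_iff[of "-1" k 0] lborel_integrable_real_affine_iff[of "-1" m 0]
    by (intro Bochner_Integration.integrable_add integrable_divide_zero) auto
  have bound: "norm (diffusive_kernel \<alpha> lam \<eta> \<xi>) \<le> norm (G \<xi>)" for \<xi>
  proof -
    have nonneg: "k x \<ge> 0" "m x \<ge> 0" for x by (auto simp: k_def m_def)
    consider "\<xi> = 0" | "\<xi> \<noteq> 0" "\<bar>\<xi>\<bar> \<le> 1" | "\<bar>\<xi>\<bar> > 1" by fastforce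
    then show ?thesis
    proof cases
      case 1
      then show ?thesis by (simp add: diffusive_kernel_def mu_def)
    next
      case 2
      then have "k \<xi> + k (- \<xi>) = \<bar>\<xi>\<bar> powr (2 * \<alpha> - 1)" by (auto simp: k_def)
      then have "\<bar>\<xi>\<bar> powr (2 * \<alpha> - 1) / \<bar>lam\<bar> \<le> G \<xi>"
        using nonneg by (simp add: G_def)
      from order_trans[OF norm_diffusive_kernel_le(1)[OF 2(1) \<eta> lam] this] show ?thesis
        by simp
    next
      case 3
      then have "m \<xi> + m (- \<xi>) = \<bar>\<xi>\<bar> powr (2 * \<alpha> - 3)" by (auto simp: m_def)
      moreover have "\<xi> \<noteq> 0" using 3 by auto
      moreover have "\<bar>\<xi>\<bar> powr (2 * \<alpha> - 3) \<le> G \<xi>"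
        if "m \<xi> + m (- \<xi>) = \<bar>\<xi>\<bar> powr (2 * \<alpha> - 3)"
        using nonneg that lam by (simp add: G_def)
      ultimately show ?thesis
        using order_trans[OF norm_diffusive_kernel_le(2)[OF _ \<eta>]] by simp
    qed
  qed
  show ?thesis
  proof (rule Bochner_Integration.integrable_bound[OF G])
    show "diffusive_kernel \<alpha> lam \<eta> \<in> borel_measurable lborel"
      unfolding diffusive_kernel_def[abs_def] diffusive_denom_def by measurable
  qed (use bound in simp)
qed

lemma Re_diffusive_coeff_pos:
  assumes "0 < \<alpha>" "\<alpha> < 1" and lam: "lam \<noteq> 0" and \<eta>: "\<eta> \<ge> 0"
  shows "Re (diffusive_coeff \<alpha> lam \<eta>) > 0"
proof -
  let ?f = "diffusive_kernel \<alpha> lam \<eta>"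
  let ?g = "\<lambda>\<xi>. mu \<alpha> \<xi> * mu \<alpha> \<xi> * (\<xi>\<^sup>2 + \<eta>) / ((\<xi>\<^sup>2 + \<eta>)\<^sup>2 + lam\<^sup>2)"
  have Re_f: "Re (?f \<xi>) = ?g \<xi>" for \<xi>
    by (simp add: diffusive_kernel_def diffusive_denom_def Re_divide power2_eq_square)
  have f: "integrable lborel ?f" by (rule integrable_diffusive_kernel[OF assms])
  have g: "integrable lborel ?g"
    using integrable_Re[OF f] unfolding Re_f .
  have Re_eq: "Re (diffusive_coeff \<alpha> lam \<eta>) = integral\<^sup>L lborel ?g"
    unfolding diffusive_coeff_def integral_bounded_linear[OF bounded_linear_Re f, symmetric] Re_f ..
  have nonneg: "?g \<xi> \<ge> 0" for \<xi>
    using \<eta> by (intro divide_nonneg_nonneg mult_nonneg_nonneg) (auto simp: mu_def)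
  have pos: "?g \<xi> > 0" if "\<xi> \<noteq> 0" for \<xi>
  proof -
    have "(\<xi>\<^sup>2 + \<eta>)\<^sup>2 + lam\<^sup>2 > 0" using lam by (simp add: add_nonneg_pos)
    then show ?thesis
      using that \<eta> by (intro divide_pos_pos mult_pos_pos) (auto simp: mu_def add_pos_nonneg)
  qed
  have "integral\<^sup>L lborel ?g \<noteq> 0"
  proof
    assume "integral\<^sup>L lborel ?g = 0"
    then have "AE \<xi> in lborel. ?g \<xi> = 0"
      using integral_nonneg_eq_0_iff_AE[OF g] nonneg by auto
    then have "AE \<xi> in lborel. (\<xi>::real) = 0"
      by (rule eventually_mono) (use pos in force)
    with AE_lborel_singleton[of 0] have "AE \<xi> in lborel. (\<xi>::real) \<noteq> \<xi>"
      by eventually_elim simp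
    then show False
      using ae_filter_eq_bot_iff[of "lborel :: real measure"] by (simp add: trivial_limit_def)
  qed
  moreover have "integral\<^sup>L lborel ?g \<ge> 0"
    using nonneg by (intro integral_nonneg_AE) auto
  ultimately show ?thesis using Re_eq by simp
qed

lemma kernel_string_component:
  fixes u u1 u2 U :: "real \<Rightarrow> complex" and \<phi> :: "real \<Rightarrow> real \<Rightarrow> complex"
  assumes "lo < hi" and h1: "H1_with lo hi u u1" and h2: "H1_with lo hi u1 u2"
    and \<rho>: "\<rho> > 0" and k: "k > 0" and \<eta>: "\<eta> \<ge> 0" and \<phi>: "L2_prod lo hi \<phi>"
    and eq_u: "\<forall>x\<in>{lo..hi}. \<i> * of_real lam * u x - U x = 0"
    and eq_U: "AE x in lborel. x \<in> {lo..hi} \<longrightarrow>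
        \<i> * of_real lam * U x - of_real (1 / \<rho>) * (of_real k * u2 x
          - of_real (frakC \<alpha>) * (LINT \<xi>|lborel. of_real (mu \<alpha> \<xi>) * \<phi> x \<xi>)) = 0"
    and eq_\<phi>: "AE z in lborel \<Otimes>\<^sub>M lborel. fst z \<in> {lo..hi} \<longrightarrow>
        \<i> * of_real lam * \<phi> (fst z) (snd z)
          - (- of_real ((snd z)\<^sup>2 + \<eta>) * \<phi> (fst z) (snd z) + of_real (mu \<alpha> (snd z)) * U (fst z)) = 0"
  defines "\<kappa> \<equiv> (- of_real (lam\<^sup>2 * \<rho>) + \<i> * of_real lam * of_real (frakC \<alpha>) * diffusive_coeff \<alpha> lam \<eta>) / of_real k"
  shows "continuous_on {lo..hi} u" "continuous_on {lo..hi} u1"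
    and "\<And>x. x \<in> {lo<..<hi} \<Longrightarrow> (u has_vector_derivative u1 x) (at x)"
    and "\<kappa> * of_real (integral {lo..hi} (\<lambda>x. (cmod (u x))\<^sup>2)) =
       u1 hi * cnj (u hi) - u1 lo * cnj (u lo) - of_real (integral {lo..hi} (\<lambda>x. (cmod (u1 x))\<^sup>2))"
    and "AE z in lborel \<Otimes>\<^sub>M lborel. fst z \<in> {lo..hi} \<longrightarrow>
       \<phi> (fst z) (snd z) = of_real (mu \<alpha> (snd z)) * U (fst z) / diffusive_denom lam \<eta> (snd z)"
proof -
  show u: "continuous_on {lo..hi} u" and u1: "continuous_on {lo..hi} u1"
    using h1 h2 by (simp_all add: H1_with_def)
  show \<phi>_sol: "AE z in lborel \<Otimes>\<^sub>M lborel. fst z \<in> {lo..hi} \<longrightarrow>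
       \<phi> (fst z) (snd z) = of_real (mu \<alpha> (snd z)) * U (fst z) / diffusive_denom lam \<eta> (snd z)"
    by (rule memory_variable_eq_ae[OF eq_\<phi> \<eta>])
  \<comment> \<open>substituting U = i lam u and the memory term reduces the string equation to u'' = kappa u\<close>
  have "AE x in lborel. x \<in> {lo..hi} \<longrightarrow> u2 x = \<kappa> * u x"
    using eq_U memory_integral_ae[OF \<phi> \<phi>_sol]
  proof eventually_elim
    case (elim x)
    show ?case
    proof
      assume x: "x \<in> {lo..hi}"
      with eq_u have "U x = \<i> * of_real lam * u x" by auto
      with elim x have "\<i> * of_real lam * (\<i> * of_real lam * u x) - of_real (1 / \<rho>) * (of_real k * u2 x
          - of_real (frakC \<alpha>) * ((\<i> * of_real lam * u x) * diffusive_coeff \<alpha> lam \<eta>)) = 0"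
        by simp
      then show "u2 x = \<kappa> * u x"
        using \<rho> k unfolding \<kappa>_def by (simp add: field_simps power2_eq_square)
    qed
  qed
  then have "x \<in> {lo<..<hi} \<Longrightarrow> (u1 has_vector_derivative \<kappa> * u x) (at x)" for x
    using h2 u by (intro weak_deriv_imp_has_vector_derivative[of lo hi u1 u2]) (auto simp: H1_with_def L2_on_def
        intro!: continuous_intros)
  moreover show du: "x \<in> {lo<..<hi} \<Longrightarrow> (u has_vector_derivative u1 x) (at x)" for x
    using h1 u1 by (intro weak_deriv_imp_has_vector_derivative[of lo hi u u1]) (auto simp: H1_with_def L2_on_def)
  ultimately show "\<kappa> * of_real (integral {lo..hi} (\<lambda>x. (cmod (u x))\<^sup>2)) =
       u1 hi * cnj (u hi) - u1 lo * cnj (u lo) - of_real (integral {lo..hi} (\<lambda>x. (cmod (u1 x))\<^sup>2))"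
    using energy_identity[OF _ u u1] \<open>lo < hi\<close> by simp
qed

lemma transmission_energy_alternative:
  fixes A B P Q k1 k2 \<rho>1 \<rho>2 C lam :: real and c a0 a1 b0 b1 :: complex
  assumes nonneg: "A \<ge> 0" "B \<ge> 0" "P \<ge> 0" "Q \<ge> 0" and k: "k1 > 0" "k2 > 0" and C: "C > 0"
    and c: "lam \<noteq> 0 \<Longrightarrow> Re c > 0"
    and eu: "(- of_real (lam\<^sup>2 * \<rho>1) + \<i> * of_real lam * of_real C * c) / of_real k1 * of_real A = a1 - a0 - of_real P"
    and ev: "(- of_real (lam\<^sup>2 * \<rho>2) + \<i> * of_real lam * of_real C * c) / of_real k2 * of_real B = b1 - b0 - of_real Q"
    and outer: "a0 = 0" "b1 = 0" and interface: "of_real k1 * a1 = of_real k2 * b0"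
  shows "(A = 0 \<and> B = 0) \<or> (P = 0 \<and> Q = 0)"
proof -
  let ?E1 = "- of_real (lam\<^sup>2 * \<rho>1) + \<i> * of_real lam * of_real C * c"
  let ?E2 = "- of_real (lam\<^sup>2 * \<rho>2) + \<i> * of_real lam * of_real C * c"
  have "?E1 * of_real A = of_real k1 * a1 - of_real (k1 * P)"
    using eu outer k(1) by (simp add: field_simps)
  moreover have "?E2 * of_real B = - (of_real k2 * b0) - of_real (k2 * Q)"
    using ev outer k(2) by (simp add: field_simps)
  ultimately have sum: "?E1 * of_real A + ?E2 * of_real B = - of_real (k1 * P + k2 * Q)"
    using interface by simp
  show ?thesis
  proof (cases "lam = 0")
    case True
    from arg_cong[OF sum, of Re] True have "k1 * P + k2 * Q = 0" by simp
    moreover have "k1 * P \<ge> 0" "k2 * Q \<ge> 0" using nonneg k by simp_all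
    ultimately have "k1 * P = 0" "k2 * Q = 0" by linarith+
    with k show ?thesis by simp
  next
    case False
    have "Im (?E1 * of_real A + ?E2 * of_real B) = lam * C * Re c * (A + B)"
      by (simp add: algebra_simps)
    with sum have "lam * C * Re c * (A + B) = 0" by simp
    with False C c have "A + B = 0" by simp
    with nonneg show ?thesis by simp
  qed
qed

lemma vanishes_if_energy_vanishes:
  fixes u u1 :: "real \<Rightarrow> complex"
  assumes "lo < hi" and u: "continuous_on {lo..hi} u" and u1: "continuous_on {lo..hi} u1"
    and du: "\<And>x. x \<in> {lo<..<hi} \<Longrightarrow> (u has_vector_derivative u1 x) (at x)"
    and c: "c \<in> {lo..hi}" "u c = 0"
    and energy: "integral {lo..hi} (\<lambda>x. (cmod (u x))\<^sup>2) = 0 \<or> integral {lo..hi} (\<lambda>x. (cmod (u1 x))\<^sup>2) = 0"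
  shows "\<forall>x\<in>{lo..hi}. u x = 0"
proof -
  have zero: "\<forall>x\<in>{lo..hi}. f x = 0"
    if "continuous_on {lo..hi} f" "integral {lo..hi} (\<lambda>x. (cmod (f x))\<^sup>2) = 0" for f :: "real \<Rightarrow> complex"
  proof -
    have "integral (cbox lo hi) (\<lambda>x. (cmod (f x))\<^sup>2) = 0 \<longleftrightarrow> (\<forall>x\<in>cbox lo hi. (cmod (f x))\<^sup>2 = 0)"
      by (rule integral_cbox_eq_0_iff) (use that \<open>lo < hi\<close> in \<open>auto intro!: continuous_intros\<close>)
    with that show ?thesis by simp
  qed
  from energy show ?thesis
  proof
    assume "integral {lo..hi} (\<lambda>x. (cmod (u1 x))\<^sup>2) = 0"
    with zero[OF u1] have "\<forall>x\<in>{lo..hi}. u1 x = 0" by blast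
    then have deriv0: "(u has_derivative (\<lambda>h. 0)) (at x within {lo..hi})" if "x \<in> {lo..hi} - {lo, hi}" for x
      using du[of x] that by (auto simp: has_vector_derivative_def intro: has_derivative_at_withinI)
    have const: "u x = u lo" if "x \<in> {lo..hi}" for x
      using has_derivative_zero_unique_strong_interval[of "{lo, hi}", OF _ u refl deriv0 that] by simp
    show ?thesis
    proof
      fix x assume "x \<in> {lo..hi}"
      from const[OF this] const[OF c(1)] c(2) show "u x = 0" by simp
    qed
  qed (use zero[OF u] in blast)
qed

lemma integral_cmod_sq_nonneg:
  fixes f :: "real \<Rightarrow> complex"
  assumes "continuous_on {a..b} f"
  shows "integral {a..b} (\<lambda>x. (cmod (f x))\<^sup>2) \<ge> 0"
  by (intro integral_nonneg integrable_continuous_interval continuous_intros assms) simp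

theorem proposition4p2:
  fixes \<rho>1 \<rho>2 k1 k2 L \<alpha> \<eta> lam :: real
    and u u1 u2 U :: "real \<Rightarrow> complex"   \<comment> \<open>u, u_x, u_xx, U on [-L,0]\<close>
    and v v1 v2 V :: "real \<Rightarrow> complex"   \<comment> \<open>v, v_x, v_xx, V on [0,L]\<close>
    and \<phi>1 \<phi>2 :: "real \<Rightarrow> real \<Rightarrow> complex"  \<comment> \<open>functions of (x, xi)\<close>
  assumes params: "\<rho>1 > 0" "\<rho>2 > 0" "k1 > 0" "k2 > 0" "L > 0" "0 < \<alpha>" "\<alpha> < 1" "\<eta> \<ge> 0"
    \<comment> \<open>the state lies in D(A)\<close>
    and dom_uv: "H10 L u v"
    and dom_UV: "H10 L U V"
    and dom_u: "H1_with (-L) 0 u u1" "H1_with (-L) 0 u1 u2"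
    and dom_v: "H1_with 0 L v v1" "H1_with 0 L v1 v2"
    and dom_trans: "complex_of_real k1 * u1 0 = complex_of_real k2 * v1 0"
    and dom_phi1: "L2_prod (-L) 0 \<phi>1"
      "L2_prod (-L) 0 (\<lambda>x \<xi>. complex_of_real \<bar>\<xi>\<bar> * \<phi>1 x \<xi>)"
      "L2_prod (-L) 0 (\<lambda>x \<xi>. - complex_of_real (\<xi>\<^sup>2 + \<eta>) * \<phi>1 x \<xi>
                                + complex_of_real (mu \<alpha> \<xi>) * U x)"
    and dom_phi2: "L2_prod 0 L \<phi>2"
      "L2_prod 0 L (\<lambda>x \<xi>. complex_of_real \<bar>\<xi>\<bar> * \<phi>2 x \<xi>)"
      "L2_prod 0 L (\<lambda>x \<xi>. - complex_of_real (\<xi>\<^sup>2 + \<eta>) * \<phi>2 x \<xi>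
                                + complex_of_real (mu \<alpha> \<xi>) * V x)"
    \<comment> \<open>(i lambda I - A) applied to the state is zero in H\<close>
    and eq_u: "\<forall>x\<in>{-L..0}. \<i> * complex_of_real lam * u x - U x = 0"
    and eq_v: "\<forall>x\<in>{0..L}. \<i> * complex_of_real lam * v x - V x = 0"
    and eq_U: "AE x in lborel. x \<in> {-L..0} \<longrightarrow>
        \<i> * complex_of_real lam * U x
          - complex_of_real (1 / \<rho>1) * (complex_of_real k1 * u2 x
              - complex_of_real (frakC \<alpha>) * (LINT \<xi>|lborel. complex_of_real (mu \<alpha> \<xi>) * \<phi>1 x \<xi>)) = 0"
    and eq_V: "AE x in lborel. x \<in> {0..L} \<longrightarrow>
        \<i> * complex_of_real lam * V x
          - complex_of_real (1 / \<rho>2) * (complex_of_real k2 * v2 x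
              - complex_of_real (frakC \<alpha>) * (LINT \<xi>|lborel. complex_of_real (mu \<alpha> \<xi>) * \<phi>2 x \<xi>)) = 0"
    and eq_phi1: "AE z in lborel \<Otimes>\<^sub>M lborel. fst z \<in> {-L..0} \<longrightarrow>
        \<i> * complex_of_real lam * \<phi>1 (fst z) (snd z)
          - (- complex_of_real ((snd z)\<^sup>2 + \<eta>) * \<phi>1 (fst z) (snd z)
             + complex_of_real (mu \<alpha> (snd z)) * U (fst z)) = 0"
    and eq_phi2: "AE z in lborel \<Otimes>\<^sub>M lborel. fst z \<in> {0..L} \<longrightarrow>
        \<i> * complex_of_real lam * \<phi>2 (fst z) (snd z)
          - (- complex_of_real ((snd z)\<^sup>2 + \<eta>) * \<phi>2 (fst z) (snd z)
             + complex_of_real (mu \<alpha> (snd z)) * V (fst z)) = 0"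
  shows "(\<forall>x\<in>{-L..0}. u x = 0) \<and> (\<forall>x\<in>{0..L}. v x = 0)
       \<and> (AE x in lborel. x \<in> {-L..0} \<longrightarrow> U x = 0)
       \<and> (AE x in lborel. x \<in> {0..L} \<longrightarrow> V x = 0)
       \<and> (AE z in lborel \<Otimes>\<^sub>M lborel. fst z \<in> {-L..0} \<longrightarrow> \<phi>1 (fst z) (snd z) = 0)
       \<and> (AE z in lborel \<Otimes>\<^sub>M lborel. fst z \<in> {0..L} \<longrightarrow> \<phi>2 (fst z) (snd z) = 0)"
proof -
  have L: "-L < 0" "0 < L" using params(5) by auto
  have bc: "u (-L) = 0" "v L = 0" "u 0 = v 0" using dom_uv by (simp_all add: H10_def)
  note u_side = kernel_string_component[OF L(1) dom_u params(1,3,8) dom_phi1(1) eq_u eq_U eq_phi1]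
  note v_side = kernel_string_component[OF L(2) dom_v params(2,4,8) dom_phi2(1) eq_v eq_V eq_phi2]
  have "frakC \<alpha> > 0" using params(6,7) by (simp add: frakC_def sin_gt_zero)
  moreover have "of_real k1 * (u1 0 * cnj (u 0)) = of_real k2 * (v1 0 * cnj (v 0))"
    using dom_trans bc(3) by (metis mult.assoc)
  ultimately have "(integral {-L..0} (\<lambda>x. (cmod (u x))\<^sup>2) = 0 \<and> integral {0..L} (\<lambda>x. (cmod (v x))\<^sup>2) = 0)
      \<or> (integral {-L..0} (\<lambda>x. (cmod (u1 x))\<^sup>2) = 0 \<and> integral {0..L} (\<lambda>x. (cmod (v1 x))\<^sup>2) = 0)"
    using bc by (intro transmission_energy_alternative[OF integral_cmod_sq_nonneg[OF u_side(1)]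
        integral_cmod_sq_nonneg[OF v_side(1)] integral_cmod_sq_nonneg[OF u_side(2)]
        integral_cmod_sq_nonneg[OF v_side(2)] params(3,4) _ Re_diffusive_coeff_pos[OF params(6,7) _ params(8)]
        u_side(4) v_side(4)]) simp_all
  then have u0: "\<forall>x\<in>{-L..0}. u x = 0" and v0: "\<forall>x\<in>{0..L}. v x = 0"
    using vanishes_if_energy_vanishes[OF L(1) u_side(1-3), of "-L"]
      vanishes_if_energy_vanishes[OF L(2) v_side(1-3), of L] bc L
    by (meson atLeastAtMost_iff order_refl less_imp_le)+
  with eq_u eq_v have U0: "\<forall>x\<in>{-L..0}. U x = 0" and V0: "\<forall>x\<in>{0..L}. V x = 0"
    by auto
  show ?thesis
    using u0 v0 U0 V0 u_side(5) v_side(5) by (auto elim!: eventually_mono)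
qed

end
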